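(* Monitor-triggered temporal logic is strictly more expressive than LTL: for every LTL formula $\phi$ over ${\cal P}$ there is a monitor-triggered formula satisfied by exactly the same infinite traces over $2^{\cal P}$, and there is a monitor-triggered formula whose set of satisfying infinite traces is not the set of satisfying traces of any LTL formula.
   Context: Let ${\cal P}={\cal P}_{in}\cup{\cal P}_{out}$ be a set of propositions. Infinite traces $\sigma=\sigma_0\sigma_1\cdots$ have letters $\sigma_i\subseteq{\cal P}$; $\sigma_{i,j}=\sigma_i\cdots\sigma_j$ and $\sigma_{i,\infty}$ is the suffix from $i$. LTL: $\phi ::= \mathit{tt}\mid\mathit{ff}\mid e\mid\neg e\mid\phi\wedge\phi\mid\phi\vee\phi\mid X\phi\mid\phi U\phi\mid G\phi$ with the standard infinite-trace semantics. Co-safety LTL: the fragment without $G$. Finite-trace semantics of co-safety formulas on $\sigma_{i,j}$ ($j<\infty$): atoms and Boolean connectives evaluated at position $i$ as usual; $\sigma_{i,j}\vdash X\varphi$ iff $j>i$ and $\sigma_{i+1,j}\vdash\varphi$; $\sigma_{i,j}\vdash\varphi U\psi$ iff some $l\in[i,j]$ has $\sigma_{l,j}\vdash\psi$ and $\sigma_{k,j}\vdash\varphi$ for all $k\in[i,l)$. Tight satisfaction $\sigma_{i,j}\Vdash\varphi$: $\sigma_{i,j}\vdash\varphi$ and no $\sigma_{i,k}$ with $i\le k<j$ satisfies $\varphi$. Flagging monitor over $\Sigma=2^{{\cal P}_{in}}$: a tuple $D=\langle \Sigma, \mathbb{V}, \Theta, Q, \theta_0, q_0, F, \perp, \rightarrow\rangle$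 with typed variables $\mathbb{V}$ (arbitrary domains), valuations $\Theta$, finite states $Q$, initial valuation $\theta_0$, initial state $q_0$, flagging states $F\subseteq Q\setminus\{q_0\}$, sink $\perp$, and deterministic transitions $q\xrightarrow{g\mapsto a}q'$ ($q\ne\perp$) with guards $g:\Sigma\times\Theta\to\{\mathit{true},\mathit{false}\}$ and actions $a:\Sigma\times\Theta\to\Theta$. Semantics on configurations $(q,\theta)$ reading $E$: (1) if $q\notin F\cup\{\perp\}$ and a transition from $q$ has true guard, take it and set the valuation to $a(E,\theta)$; (2) if $q\notin F\cup\{\perp\}$ and no guard holds, stay; (3) $\perp$ stays; (4) a state of $F$ moves to $\perp$. On a trace over $2^{\cal P}$ the monitor reads the events $\sigma_i\cap{\cal P}_{in}$. $\sigma_{i,j}\Vdash D$ iff the run from $(q_0,\theta_0)$ on $\sigma_i,\dots,\sigma_j$ ends in a state of $F$. Monitor-triggered formulas: $\pi' ::= D{:}\phi\mid(D;\varphi)^*$ and $\pi ::= \phi\rightarrow\pi'$, with $D$ a monitor, $\phi$ LTL, $\varphi$ co-safety LTL. Semantics: $\sigma_{i,\infty}\vdash D{:}\phi$ iff for all $j\ge i$, $\sigma_{i,j}\Vdash D$ implies $\sigma_{j,\infty}\vdash\phi$. $\sigma_{i,k}\vdash D;\varphi$ iff there is $j\in[i,k]$ with $\sigma_{i,j}\Vdash D$ and $\sigma_{j,k}\Vdash\varphi$. Define restart points of $\sigma$: $0$ is one, and if $p$ is one and $\sigma_{p,k}\vdash D;\varphi$ then $k+1$ is one. $\sigma\vdash(D;\varphi)^*$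 iff for every restart point $p$ and every $i\ge p$ with $\sigma_{p,i}\Vdash D$ there is $k\ge i$ with $\sigma_{p,k}\vdash D;\varphi$. $\sigma\vdash\phi\rightarrow\pi'$ iff $\sigma\vdash\phi$ implies $\sigma\vdash\pi'$. $\sigma\vdash\pi'$ means $\sigma_{0,\infty}\vdash\pi'$. *)

theory Defs
  imports Main
begin

datatype 'p ltl =
    TT | FF | Prop 'p | NProp 'p
  | And "'p ltl" "'p ltl" | Or "'p ltl" "'p ltl"
  | Next "'p ltl" | Until "'p ltl" "'p ltl" | Glob "'p ltl"

type_synonym 'p trace = "nat \<Rightarrow> 'p set"

fun ltl_sat :: "'p trace \<Rightarrow> nat \<Rightarrow> 'p ltl \<Rightarrow> bool" where
  "ltl_sat s i TT = True"
| "ltl_sat s i FF = False"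
| "ltl_sat s i (Prop e) = (e \<in> s i)"
| "ltl_sat s i (NProp e) = (e \<notin> s i)"
| "ltl_sat s i (And a b) = (ltl_sat s i a \<and> ltl_sat s i b)"
| "ltl_sat s i (Or a b) = (ltl_sat s i a \<or> ltl_sat s i b)"
| "ltl_sat s i (Next a) = ltl_sat s (Suc i) a"
| "ltl_sat s i (Until a b) =
     (\<exists>l\<ge>i. ltl_sat s l b \<and> (\<forall>k. i \<le> k \<and> k < l \<longrightarrow> ltl_sat s k a))"
| "ltl_sat s i (Glob a) = (\<forall>k\<ge>i. ltl_sat s k a)"

fun cosafety :: "'p ltl \<Rightarrow> bool" where
  "cosafety (And a b) = (cosafety a \<and> cosafety b)"
| "cosafety (Or a b) = (cosafety a \<and> cosafety b)"
| "cosafety (Next a) = cosafety a"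
| "cosafety (Until a b) = (cosafety a \<and> cosafety b)"
| "cosafety (Glob a) = False"
| "cosafety _ = True"

fun fin_sat :: "'p trace \<Rightarrow> nat \<Rightarrow> nat \<Rightarrow> 'p ltl \<Rightarrow> bool" where
  "fin_sat s i j TT = True"
| "fin_sat s i j FF = False"
| "fin_sat s i j (Prop e) = (e \<in> s i)"
| "fin_sat s i j (NProp e) = (e \<notin> s i)"
| "fin_sat s i j (And a b) = (fin_sat s i j a \<and> fin_sat s i j b)"
| "fin_sat s i j (Or a b) = (fin_sat s i j a \<or> fin_sat s i j b)"
| "fin_sat s i j (Next a) = (j > i \<and> fin_sat s (Suc i) j a)"
| "fin_sat s i j (Until a b) =
     (\<exists>l. i \<le> l \<and> l \<le> j \<and> fin_sat s l j b \<and> (\<forall>k. i \<le> k \<and> k < l \<longrightarrow> fin_sat s k j a))"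
| "fin_sat s i j (Glob a) = False" \<comment> \<open>never used: only co-safety formulas are evaluated finitely\<close>

definition tight_sat :: "'p trace \<Rightarrow> nat \<Rightarrow> nat \<Rightarrow> 'p ltl \<Rightarrow> bool" where
  "tight_sat s i j phi \<longleftrightarrow> fin_sat s i j phi \<and> (\<forall>k. i \<le> k \<and> k < j \<longrightarrow> \<not> fin_sat s i k phi)"

text \<open>Events are subsets of P_in; 'v is the type of valuations of the (typed) monitor variables,
  'q the type of control states.\<close>
record ('p, 'q, 'v) monitor =
  states :: "'q set"
  init_val :: 'v
  init :: 'q
  flags :: "'q set"
  sink :: 'q
  trans :: "('q \<times> ('p set \<Rightarrow> 'v \<Rightarrow> bool) \<times> ('p set \<Rightarrow> 'v \<Rightarrow> 'v) \<times> 'q) set"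

definition wf_monitor :: "'p set \<Rightarrow> ('p, 'q, 'v) monitor \<Rightarrow> bool" where
  "wf_monitor Pin D \<longleftrightarrow>
     finite (states D) \<and> init D \<in> states D \<and> sink D \<in> states D \<and>
     flags D \<subseteq> states D - {init D} \<and> sink D \<notin> flags D \<and>
     (\<forall>q g a q'. (q, g, a, q') \<in> trans D \<longrightarrow> q \<in> states D \<and> q' \<in> states D \<and> q \<noteq> sink D) \<and>
     (\<forall>q g1 a1 q1 g2 a2 q2 E th. E \<subseteq> Pin \<and>
        (q, g1, a1, q1) \<in> trans D \<and> (q, g2, a2, q2) \<in> trans D \<and> g1 E th \<and> g2 E th \<longrightarrow>
        (g1, a1, q1) = (g2, a2, q2))"

definition mstep :: "('p, 'q, 'v) monitor \<Rightarrow> 'p set \<Rightarrow> 'q \<times> 'v \<Rightarrow> 'q \<times> 'v" where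
  "mstep D E c = (let (q, th) = c in
     if q = sink D then (q, th)
     else if q \<in> flags D then (sink D, th)
     else if (\<exists>g a q'. (q, g, a, q') \<in> trans D \<and> g E th) then
       (let (g, a, q') = (THE t. (q, t) \<in> trans D \<and> fst t E th) in (q', a E th))
     else (q, th))"

text \<open>Configuration after reading n events sigma_i .. sigma_(i+n-1), each restricted to P_in.\<close>
fun mrun :: "'p set \<Rightarrow> ('p, 'q, 'v) monitor \<Rightarrow> 'p trace \<Rightarrow> nat \<Rightarrow> nat \<Rightarrow> 'q \<times> 'v" where
  "mrun Pin D s i 0 = (init D, init_val D)"
| "mrun Pin D s i (Suc n) = mstep D (s (i + n) \<inter> Pin) (mrun Pin D s i n)"

definition mon_tight :: "'p set \<Rightarrow> ('p, 'q, 'v) monitor \<Rightarrow> 'p trace \<Rightarrow> nat \<Rightarrow> nat \<Rightarrow> bool" where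
  "mon_tight Pin D s i j \<longleftrightarrow> i \<le> j \<and> fst (mrun Pin D s i (Suc (j - i))) \<in> flags D"

datatype ('p, 'q, 'v) mtrig =
    Trig "('p, 'q, 'v) monitor" "'p ltl"
  | Star "('p, 'q, 'v) monitor" "'p ltl"

datatype ('p, 'q, 'v) mtl = Impl "'p ltl" "('p, 'q, 'v) mtrig"

fun wf_mtrig :: "'p set \<Rightarrow> ('p, 'q, 'v) mtrig \<Rightarrow> bool" where
  "wf_mtrig Pin (Trig D phi) = wf_monitor Pin D"
| "wf_mtrig Pin (Star D phi) = (wf_monitor Pin D \<and> cosafety phi)"

fun wf_mtl :: "'p set \<Rightarrow> ('p, 'q, 'v) mtl \<Rightarrow> bool" where
  "wf_mtl Pin (Impl phi p) = wf_mtrig Pin p"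

definition seq_sat :: "'p set \<Rightarrow> ('p, 'q, 'v) monitor \<Rightarrow> 'p ltl \<Rightarrow> 'p trace \<Rightarrow> nat \<Rightarrow> nat \<Rightarrow> bool" where
  "seq_sat Pin D phi s i k \<longleftrightarrow>
     (\<exists>j. i \<le> j \<and> j \<le> k \<and> mon_tight Pin D s i j \<and> tight_sat s j k phi)"

inductive restart :: "'p set \<Rightarrow> ('p, 'q, 'v) monitor \<Rightarrow> 'p ltl \<Rightarrow> 'p trace \<Rightarrow> nat \<Rightarrow> bool"
  for Pin D phi s where
  restart0: "restart Pin D phi s 0"
| restartS: "restart Pin D phi s p \<Longrightarrow> seq_sat Pin D phi s p k \<Longrightarrow> restart Pin D phi s (Suc k)"

fun mtrig_sat :: "'p set \<Rightarrow> 'p trace \<Rightarrow> ('p, 'q, 'v) mtrig \<Rightarrow> bool" where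
  "mtrig_sat Pin s (Trig D phi) =
     (\<forall>j. mon_tight Pin D s 0 j \<longrightarrow> ltl_sat s j phi)"
| "mtrig_sat Pin s (Star D phi) =
     (\<forall>p. restart Pin D phi s p \<longrightarrow>
        (\<forall>i\<ge>p. mon_tight Pin D s p i \<longrightarrow> (\<exists>k\<ge>i. seq_sat Pin D phi s p k)))"

fun mtl_sat :: "'p set \<Rightarrow> 'p trace \<Rightarrow> ('p, 'q, 'v) mtl \<Rightarrow> bool" where
  "mtl_sat Pin s (Impl phi p) = (ltl_sat s 0 phi \<longrightarrow> mtrig_sat Pin s p)"

end

theory Submission
  imports Defs "HOL-Library.Omega_Words_Fun"
begin

(* A monitor that flags on its first event turns  tt \<rightarrow> D:\<phi>  into  \<phi>  evaluated at position 0,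
   so every LTL formula is expressible.  With the same monitor and the co-safety formula
   e \<and> X tt, whose tight models are the two-letter segments starting with e, the restart points
   of  (D; e \<and> X tt)*  are the even positions up to the first failure of e; the formula thus
   says that e holds at every even position.  This property is not LTL-definable (Wolper):
   a formula of size n cannot tell a^k w from a^(k+1) w when n < k, whereas moving the only
   position where e fails from an odd to an even index changes the property. *)

lemma ex_ge_add_shift: "(\<exists>l\<ge>k + i. P l) \<longleftrightarrow> (\<exists>l\<ge>i. P (k + l :: nat))"
proof
  assume "\<exists>l\<ge>k + i. P l"
  then obtain l where "k + i \<le> l" "P l"
    by blast
  then show "\<exists>l\<ge>i. P (k + l)"
    by (intro exI[of _ "l - k"]) auto
next
  assume "\<exists>l\<ge>i. P (k + l)"
  then obtain l where "i \<le> l" "P (k + l)"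
    by blast
  then show "\<exists>l\<ge>k + i. P l"
    by (intro exI[of _ "k + l"]) simp
qed

lemma all_ge_add_shift: "(\<forall>l\<ge>k + i. P l) \<longleftrightarrow> (\<forall>l\<ge>i. P (k + l :: nat))"
  using ex_ge_add_shift[of k i "\<lambda>l. \<not> P l"] by blast

lemma ltl_sat_shift: "ltl_sat (\<lambda>n. s (k + n)) i phi \<longleftrightarrow> ltl_sat s (k + i) phi"
proof (induction phi arbitrary: i)
  case (Until a b)
  have "(\<forall>j. k + i \<le> j \<and> j < k + l \<longrightarrow> ltl_sat s j a) \<longleftrightarrow>
      (\<forall>j. i \<le> j \<and> j < l \<longrightarrow> ltl_sat s (k + j) a)" for l
    using all_ge_add_shift[of k i "\<lambda>j. j < k + l \<longrightarrow> ltl_sat s j a"] by auto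
  then show ?case
    by (simp add: Until.IH ex_ge_add_shift)
next
  case (Glob a)
  then show ?case
    by (simp add: all_ge_add_shift)
qed simp_all

lemma ltl_sat_Until_unfold:
  "ltl_sat s i (Until a b) \<longleftrightarrow> ltl_sat s i b \<or> (ltl_sat s i a \<and> ltl_sat s (Suc i) (Until a b))"
proof
  assume "ltl_sat s i (Until a b)"
  then obtain l where "i \<le> l" "ltl_sat s l b" "\<forall>k. i \<le> k \<and> k < l \<longrightarrow> ltl_sat s k a"
    by auto
  then show "ltl_sat s i b \<or> (ltl_sat s i a \<and> ltl_sat s (Suc i) (Until a b))"
    by (cases "l = i"; force simp: Suc_le_eq)
next
  assume "ltl_sat s i b \<or> (ltl_sat s i a \<and> ltl_sat s (Suc i) (Until a b))"
  then show "ltl_sat s i (Until a b)"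
  proof
    assume "ltl_sat s i a \<and> ltl_sat s (Suc i) (Until a b)"
    then obtain l where "ltl_sat s i a" "Suc i \<le> l" "ltl_sat s l b"
      "\<forall>k. Suc i \<le> k \<and> k < l \<longrightarrow> ltl_sat s k a"
      by auto
    then show ?thesis
      by (auto intro!: exI[of _ l] simp: Suc_le_eq dest: le_imp_less_or_eq)
  qed auto
qed

lemma ltl_sat_Glob_unfold:
  "ltl_sat s i (Glob a) \<longleftrightarrow> ltl_sat s i a \<and> ltl_sat s (Suc i) (Glob a)"
  by (auto simp: Suc_le_eq dest: le_imp_less_or_eq)

lemma ltl_sat_replicate_Suc_conc_Suc:
  "ltl_sat (replicate (Suc k) a \<frown> s) (Suc i) phi \<longleftrightarrow> ltl_sat (replicate k a \<frown> s) i phi"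
proof -
  have "(\<lambda>n. (replicate (Suc k) a \<frown> s) (1 + n)) = replicate k a \<frown> s"
    by (simp add: fun_eq_iff)
  then show ?thesis
    using ltl_sat_shift[of "replicate (Suc k) a \<frown> s" 1 i phi] by simp
qed

lemma ltl_sat_replicate_Suc_conc:
  assumes "size phi < k"
  shows "ltl_sat (replicate (Suc k) a \<frown> s) 0 phi \<longleftrightarrow> ltl_sat (replicate k a \<frown> s) 0 phi"
  using assms
proof (induction phi arbitrary: k)
  case (Next phi)
  then obtain k' where "k = Suc k'" "size phi < k'"
    by (cases k) auto
  then show ?case
    using Next.IH by (simp only: ltl_sat.simps ltl_sat_replicate_Suc_conc_Suc)
next
  case (Until phi psi)
  let ?long = "replicate (Suc k) a \<frown> s" and ?short = "replicate k a \<frown> s"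
  have IH: "ltl_sat ?long 0 phi = ltl_sat ?short 0 phi" "ltl_sat ?long 0 psi = ltl_sat ?short 0 psi"
    by (rule Until.IH(1), use Until.prems in simp, rule Until.IH(2), use Until.prems in simp)
  have tail: "ltl_sat ?long (Suc 0) (Until phi psi) = ltl_sat ?short 0 (Until phi psi)"
    by (rule ltl_sat_replicate_Suc_conc_Suc)
  have "ltl_sat ?long 0 (Until phi psi) \<longleftrightarrow>
      ltl_sat ?long 0 psi \<or> (ltl_sat ?long 0 phi \<and> ltl_sat ?long (Suc 0) (Until phi psi))"
    by (rule ltl_sat_Until_unfold)
  also have "\<dots> \<longleftrightarrow> ltl_sat ?short 0 psi \<or> (ltl_sat ?short 0 phi \<and> ltl_sat ?short 0 (Until phi psi))"
    by (simp only: IH tail)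
  also have "\<dots> \<longleftrightarrow> ltl_sat ?short 0 (Until phi psi)"
    using ltl_sat_Until_unfold[of ?short 0 phi psi] by blast
  finally show ?case .
next
  case (Glob phi)
  let ?long = "replicate (Suc k) a \<frown> s" and ?short = "replicate k a \<frown> s"
  have IH: "ltl_sat ?long 0 phi = ltl_sat ?short 0 phi"
    by (rule Glob.IH) (use Glob.prems in simp)
  have tail: "ltl_sat ?long (Suc 0) (Glob phi) = ltl_sat ?short 0 (Glob phi)"
    by (rule ltl_sat_replicate_Suc_conc_Suc)
  have "ltl_sat ?long 0 (Glob phi) \<longleftrightarrow> ltl_sat ?long 0 phi \<and> ltl_sat ?long (Suc 0) (Glob phi)"
    by (rule ltl_sat_Glob_unfold)
  also have "\<dots> \<longleftrightarrow> ltl_sat ?short 0 phi \<and> ltl_sat ?short 0 (Glob phi)"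
    by (simp only: IH tail)
  also have "\<dots> \<longleftrightarrow> ltl_sat ?short 0 (Glob phi)"
    using ltl_sat_Glob_unfold[of ?short 0 phi] by blast
  finally show ?case .
qed simp_all

lemma even_positions_not_ltl_definable:
  "\<exists>s. (\<forall>p. even p \<longrightarrow> e \<in> s p) \<noteq> ltl_sat s 0 phi"
proof -
  define miss where "miss k = replicate k {e} \<frown> ({} ## (\<lambda>_. {e}))" for k
  have miss_nth: "e \<in> miss k p \<longleftrightarrow> p \<noteq> k" for k p
    by (cases "p < k"; cases "p - k") (auto simp: miss_def)
  define K where "K = Suc (2 * size phi)"
  have "ltl_sat (miss (Suc K)) 0 phi \<longleftrightarrow> ltl_sat (miss K) 0 phi"
    unfolding miss_def by (rule ltl_sat_replicate_Suc_conc) (simp add: K_def)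
  moreover have "\<forall>p. even p \<longrightarrow> e \<in> miss K p"
    by (auto simp: miss_nth K_def)
  moreover have "\<not> (\<forall>p. even p \<longrightarrow> e \<in> miss (Suc K) p)"
    by (auto simp: miss_nth K_def)
  ultimately show ?thesis
    by metis
qed

definition first_event_monitor :: "('p, nat, nat) monitor" where
  "first_event_monitor = \<lparr>states = {0, 1, 2}, init_val = 0, init = 0, flags = {1}, sink = 2,
     trans = {(0, \<lambda>E th. True, \<lambda>E th. th, 1)}\<rparr>"

lemma wf_first_event_monitor: "wf_monitor Pin first_event_monitor"
  unfolding wf_monitor_def first_event_monitor_def by auto

lemma mstep_first_event_monitor:
  assumes "q \<le> 2"
  shows "mstep first_event_monitor E (q, th) = (min 2 (Suc q), th)"
proof -
  have "(THE t. (0::nat, t) \<in> trans first_event_monitor \<and> fst t E th) = (\<lambda>E th. True, \<lambda>E th. th, 1)"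
    by (rule the_equality) (auto simp: first_event_monitor_def)
  then show ?thesis
    using assms by (auto simp: mstep_def first_event_monitor_def le_Suc_eq)
qed

lemma mrun_first_event_monitor: "mrun Pin first_event_monitor s i n = (min 2 n, 0)"
proof (induction n)
  case 0
  show ?case by (simp add: first_event_monitor_def)
next
  case (Suc n)
  then show ?case by (simp add: mstep_first_event_monitor)
qed

lemma mon_tight_first_event_monitor: "mon_tight Pin first_event_monitor s i j \<longleftrightarrow> j = i"
  unfolding mon_tight_def mrun_first_event_monitor by (auto simp: first_event_monitor_def)

definition prop_and_next :: "'p \<Rightarrow> 'p ltl" where
  "prop_and_next e = And (Prop e) (Next TT)"

lemma tight_sat_prop_and_next: "tight_sat s i k (prop_and_next e) \<longleftrightarrow> e \<in> s i \<and> k = Suc i"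
  by (auto simp: tight_sat_def prop_and_next_def dest: spec[of _ "Suc i"])

lemma seq_sat_first_event_prop_and_next:
  "seq_sat Pin first_event_monitor (prop_and_next e) s i k \<longleftrightarrow> e \<in> s i \<and> k = Suc i"
  by (auto simp: seq_sat_def mon_tight_first_event_monitor tight_sat_prop_and_next)

lemma restart_first_event_prop_and_next_even:
  "restart Pin first_event_monitor (prop_and_next e) s p \<Longrightarrow> even p"
  by (induction rule: restart.induct) (auto simp: seq_sat_first_event_prop_and_next)

lemma mtrig_sat_Star_first_event_prop_and_next:
  "mtrig_sat Pin s (Star first_event_monitor (prop_and_next e)) \<longleftrightarrow> (\<forall>p. even p \<longrightarrow> e \<in> s p)"
  (is "?star \<longleftrightarrow> _")
proof
  assume ?star
  then have step: "e \<in> s p" if "restart Pin first_event_monitor (prop_and_next e) s p" for p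
    using that by (auto simp: mon_tight_first_event_monitor seq_sat_first_event_prop_and_next)
  have "restart Pin first_event_monitor (prop_and_next e) s (2 * m)" for m
  proof (induction m)
    case 0
    show ?case by (simp add: restart0)
  next
    case (Suc m)
    then have "seq_sat Pin first_event_monitor (prop_and_next e) s (2 * m) (Suc (2 * m))"
      using step by (simp add: seq_sat_first_event_prop_and_next)
    from restartS[OF Suc this] show ?case
      by simp
  qed
  then show "\<forall>p. even p \<longrightarrow> e \<in> s p"
    using step by (auto elim!: evenE)
next
  assume "\<forall>p. even p \<longrightarrow> e \<in> s p"
  then show ?star
    by (auto simp: mon_tight_first_event_monitor seq_sat_first_event_prop_and_next
        dest: restart_first_event_prop_and_next_even)
qed

theorem theorem2:
  fixes Pin :: "'p set"
  shows "(\<forall>phi :: 'p ltl. \<exists>pi :: ('p, nat, nat) mtl.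
            wf_mtl Pin pi \<and> (\<forall>s. mtl_sat Pin s pi \<longleftrightarrow> ltl_sat s 0 phi))
       \<and> (\<exists>pi :: ('p, nat, nat) mtl. wf_mtl Pin pi \<and>
            (\<forall>phi :: 'p ltl. \<exists>s. mtl_sat Pin s pi \<noteq> ltl_sat s 0 phi))"
proof (intro conjI allI)
  fix phi :: "'p ltl"
  show "\<exists>pi :: ('p, nat, nat) mtl. wf_mtl Pin pi \<and> (\<forall>s. mtl_sat Pin s pi \<longleftrightarrow> ltl_sat s 0 phi)"
    by (intro exI[of _ "Impl TT (Trig first_event_monitor phi)"])
      (simp add: wf_first_event_monitor mon_tight_first_event_monitor)
next
  let ?pi = "Impl TT (Star first_event_monitor (prop_and_next undefined))"
  have "wf_mtl Pin ?pi"
    by (simp add: wf_first_event_monitor prop_and_next_def)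
  moreover have "mtl_sat Pin s ?pi \<longleftrightarrow> (\<forall>p. even p \<longrightarrow> undefined \<in> s p)" for s
    by (simp del: mtrig_sat.simps add: mtrig_sat_Star_first_event_prop_and_next)
  ultimately show "\<exists>pi :: ('p, nat, nat) mtl. wf_mtl Pin pi \<and>
      (\<forall>phi :: 'p ltl. \<exists>s. mtl_sat Pin s pi \<noteq> ltl_sat s 0 phi)"
    using even_positions_not_ltl_definable by metis
qed

end
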